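(* Let $\{X_n\}_{n\in\mathbb{N}}$ be a family of real Banach spaces, $Z_0=\bigoplus^{c_0}_{n\in\mathbb{N}}X_n$, and let $A$ be a separable subset of $Z_0$. Let $Y$ be a real Banach space and $\Delta:S_{Z_0}\to S_Y$ a surjective isometry. Then there exist separable subspaces $M_n\subseteq X_n$ ($n\in\mathbb{N}$) and $N\subseteq Y$ such that $A\subseteq\bigoplus^{c_0}_{n\in\mathbb{N}}M_n$ and $\Delta\big(S_{\bigoplus^{c_0}_{n\in\mathbb{N}}M_n}\big)=S_N$.
   Context: $\bigoplus^{c_0}_{n\in\mathbb{N}}X_n$ is the space of sequences $(x_n)$ with $x_n\in X_n$ and $\|x_n\|\to 0$, with the sup norm; $S_E$ denotes the unit sphere of a normed space $E$. *)

theory Defs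
  imports "HOL-Analysis.Analysis"
begin

text \<open>The c0-sum of a family of subspaces X n of a common real Banach space:
  sequences f with f n in X n and norm (f n) tending to 0.\<close>
definition c0sum :: "(nat \<Rightarrow> 'a::real_normed_vector set) \<Rightarrow> (nat \<Rightarrow> 'a) set" where
  "c0sum X = {f. (\<forall>n. f n \<in> X n) \<and> (\<lambda>n. norm (f n)) \<longlonglongrightarrow> 0}"

definition supnorm :: "(nat \<Rightarrow> 'a::real_normed_vector) \<Rightarrow> real" where
  "supnorm f = (SUP n. norm (f n))"

definition c0sphere :: "(nat \<Rightarrow> 'a::real_normed_vector set) \<Rightarrow> (nat \<Rightarrow> 'a) set" where
  "c0sphere X = {f \<in> c0sum X. supnorm f = 1}"

definition sup_separable :: "(nat \<Rightarrow> 'a::real_normed_vector) set \<Rightarrow> bool" where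
  "sup_separable A \<longleftrightarrow> (\<exists>D. countable D \<and> D \<subseteq> A \<and>
     (\<forall>f\<in>A. \<forall>e>0. \<exists>d\<in>D. supnorm (\<lambda>n. f n - d n) < e))"

end

(* Back and forth. Start from a countable sup-dense subset D_0 of A and build increasing countable
   sets D_k of sequences and E_k of points of Y: E_(k+1) adds the images under Delta of a countable
   dense subset of the unit sphere of the c0-sum of the closed spans of the coordinates of D_k, and
   D_(k+1) adds the preimages of a countable dense subset of the unit sphere of the closed span of E_k.
   Let M_n and N be the closed spans obtained from the unions. Truncating to finitely many
   coordinates and normalising, every point of the unit sphere of the c0-sum of the M_n is a limit of
   points of the spheres at finite stages, so its image is a limit of points of the E_k and lies in N.
   Symmetrically every point of the unit sphere of N is a limit of points of the spheres at finite
   stages, so its preimage is a sup-limit of elements of the D_k and has its coordinates in the M_n.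
   Closed spans of countable sets are taken as closures of rational spans, which makes their
   separability immediate. *)

theory Submission
  imports Defs
begin

definition supdist :: "(nat \<Rightarrow> 'a::real_normed_vector) \<Rightarrow> (nat \<Rightarrow> 'a) \<Rightarrow> real" where
  "supdist f g = supnorm (\<lambda>n. f n - g n)"

lemma norm_le_supnorm: "bounded (range f) \<Longrightarrow> norm (f n) \<le> supnorm f"
  unfolding supnorm_def
  by (rule cSUP_upper) (auto simp: bounded_iff bdd_above_def)

lemma supnorm_le: "(\<And>n. norm (f n) \<le> c) \<Longrightarrow> supnorm f \<le> c"
  unfolding supnorm_def by (rule cSUP_least) auto

lemma supnorm_nonneg: "bounded (range f) \<Longrightarrow> 0 \<le> supnorm f"
  using norm_le_supnorm[of f 0] norm_ge_zero order_trans by blast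

lemma supnorm_scaleR:
  assumes "bounded (range f)"
  shows "supnorm (\<lambda>n. c *\<^sub>R f n) = \<bar>c\<bar> * supnorm f"
proof (cases "c = 0")
  case True
  then show ?thesis by (simp add: supnorm_def)
next
  case False
  have "\<bar>c\<bar> * norm (f n) \<le> supnorm (\<lambda>n. c *\<^sub>R f n)" for n
    using norm_le_supnorm[OF bounded_scaleR_comp[OF assms]] by simp
  then have "supnorm f \<le> supnorm (\<lambda>n. c *\<^sub>R f n) / \<bar>c\<bar>"
    using False by (intro supnorm_le) (simp add: field_simps mult.commute)
  moreover have "supnorm (\<lambda>n. c *\<^sub>R f n) \<le> \<bar>c\<bar> * supnorm f"
    by (rule supnorm_le) (simp add: assms mult_left_mono norm_le_supnorm)
  ultimately show ?thesis
    using False by (simp add: field_simps mult.commute)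
qed

lemma norm_diff_le_supdist:
  "bounded (range f) \<Longrightarrow> bounded (range g) \<Longrightarrow> norm (f n - g n) \<le> supdist f g"
  unfolding supdist_def by (intro norm_le_supnorm bounded_minus_comp)

lemma supdist_commute: "supdist f g = supdist g f"
  unfolding supdist_def supnorm_def by (simp add: norm_minus_commute)

lemma supdist_triangle:
  assumes "bounded (range f)" "bounded (range g)" "bounded (range h)"
  shows "supdist f h \<le> supdist f g + supdist g h"
  unfolding supdist_def[of f h]
proof (rule supnorm_le)
  fix n
  have "norm (f n - h n) \<le> norm (f n - g n) + norm (g n - h n)"
    by (rule norm_diff_triangle_ineq[of "f n" "g n" "g n" "h n", simplified])
  also have "\<dots> \<le> supdist f g + supdist g h"
    using assms by (intro add_mono norm_diff_le_supdist)
  finally show "norm (f n - h n) \<le> supdist f g + supdist g h" .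
qed

lemma abs_supnorm_diff_le_supdist:
  assumes "bounded (range f)" "bounded (range g)"
  shows "\<bar>supnorm f - supnorm g\<bar> \<le> supdist f g"
proof -
  have "supnorm f \<le> supdist f g + supnorm g" if "bounded (range f)" "bounded (range g)" for f g
  proof (rule supnorm_le)
    fix n
    show "norm (f n) \<le> supdist f g + supnorm g"
      using norm_diff_le_supdist[OF that, of n] norm_le_supnorm[OF that(2), of n]
        norm_triangle_ineq2[of "f n" "g n"] by linarith
  qed
  from this[OF assms] this[OF assms(2) assms(1)] show ?thesis
    by (simp add: supdist_commute)
qed

lemma c0sum_bounded: "f \<in> c0sum X \<Longrightarrow> bounded (range f)"
  unfolding c0sum_def
  using convergent_imp_bounded[of "\<lambda>n. norm (f n)"]
  by (auto simp: convergent_def bounded_iff)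

lemma c0sum_mono: "(\<And>n. M n \<subseteq> M' n) \<Longrightarrow> c0sum M \<subseteq> c0sum M'"
  unfolding c0sum_def by blast

lemma c0sphere_mono: "(\<And>n. M n \<subseteq> M' n) \<Longrightarrow> c0sphere M \<subseteq> c0sphere M'"
  unfolding c0sphere_def using c0sum_mono by blast

lemma supdist_normalize_le:
  assumes f: "bounded (range f)" "supnorm f = 1" and g: "bounded (range g)"
  shows "supdist f (\<lambda>n. (1 / supnorm g) *\<^sub>R g n) \<le> 2 * supdist f g"
proof (cases "supnorm g = 0")
  case True
  then show ?thesis
    using abs_supnorm_diff_le_supdist[OF f(1) g] f(2) by (simp add: supdist_def)
next
  case False
  then have "supnorm g > 0"
    using supnorm_nonneg[OF g] by linarith
  let ?h = "\<lambda>n. (1 / supnorm g) *\<^sub>R g n"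
  have "supdist g ?h = supnorm (\<lambda>n. (1 - 1 / supnorm g) *\<^sub>R g n)"
    by (simp add: supdist_def algebra_simps)
  also have "\<dots> = \<bar>supnorm f - supnorm g\<bar>"
    using \<open>supnorm g > 0\<close> supnorm_scaleR[OF g] f(2)
    by (simp add: abs_mult[symmetric] field_simps abs_minus_commute)
  also have "\<dots> \<le> supdist f g"
    by (rule abs_supnorm_diff_le_supdist[OF f(1) g])
  finally have "supdist g ?h \<le> supdist f g" .
  moreover have "supdist f ?h \<le> supdist f g + supdist g ?h"
    using f g by (intro supdist_triangle bounded_scaleR_comp)
  ultimately show ?thesis by linarith
qed

section \<open>Rational spans\<close>

definition rat_combination :: "(rat \<times> 'a::real_vector) list \<Rightarrow> 'a" where
  "rat_combination l = sum_list (map (\<lambda>(q, v). of_rat q *\<^sub>R v) l)"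

(* A countable substitute for span C whose closure is still a closed subspace. *)
definition qspan :: "'a::real_vector set \<Rightarrow> 'a set" where
  "qspan C = rat_combination ` lists (UNIV \<times> C)"

lemma countable_qspan: "countable C \<Longrightarrow> countable (qspan C)"
  unfolding qspan_def by (intro countable_image countable_lists) auto

lemma zero_in_qspan: "0 \<in> qspan C"
  unfolding qspan_def by (rule image_eqI[of _ _ "[]"]) (auto simp: rat_combination_def)

lemma qspan_superset: "C \<subseteq> qspan C"
  unfolding qspan_def by (auto simp: rat_combination_def intro!: image_eqI[of _ _ "[(1, x)]" for x])

lemma qspan_add: "x \<in> qspan C \<Longrightarrow> y \<in> qspan C \<Longrightarrow> x + y \<in> qspan C"
  unfolding qspan_def by (auto simp: rat_combination_def intro!: image_eqI[of _ _ "l @ m" for l m])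

lemma qspan_scaleR_of_rat:
  assumes "x \<in> qspan C"
  shows "of_rat r *\<^sub>R x \<in> qspan C"
proof -
  obtain l where l: "l \<in> lists (UNIV \<times> C)" and x: "x = rat_combination l"
    using assms unfolding qspan_def by blast
  have "of_rat r *\<^sub>R x = rat_combination (map (\<lambda>(q, v). (r * q, v)) l)"
    unfolding x rat_combination_def by (induction l) (auto simp: of_rat_mult scaleR_add_right)
  moreover have "map (\<lambda>(q, v). (r * q, v)) l \<in> lists (UNIV \<times> C)"
    using l by auto
  ultimately show ?thesis
    unfolding qspan_def by (rule image_eqI)
qed

lemma qspan_mono: "C \<subseteq> D \<Longrightarrow> qspan C \<subseteq> qspan D"
  unfolding qspan_def by (intro image_mono lists_mono) auto

lemma qspan_subset_subspace:
  assumes "subspace V" "C \<subseteq> V"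
  shows "qspan C \<subseteq> V"
proof -
  have "rat_combination l \<in> V" if "l \<in> lists (UNIV \<times> C)" for l
    using that assms unfolding rat_combination_def
    by (induction l) (auto intro!: subspace_0 subspace_add subspace_scale)
  then show ?thesis
    unfolding qspan_def by blast
qed

lemma lists_UN_incseq:
  assumes "incseq A"
  shows "l \<in> lists (\<Union>k. A k) \<Longrightarrow> \<exists>k. l \<in> lists (A k)"
proof (induction l)
  case (Cons x l)
  then obtain i j where "x \<in> A i" "l \<in> lists (A j)"
    by auto
  then have "x \<in> A (max i j)" "l \<in> lists (A (max i j))"
    using monoD[OF assms, of i "max i j"] monoD[OF assms, of j "max i j"] lists_mono by auto
  then show ?case
    by auto
qed simp

lemma qspan_UN_incseq:
  assumes "incseq C"
  shows "qspan (\<Union>k. C k) = (\<Union>k. qspan (C k))"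
proof
  have "incseq (\<lambda>k. UNIV \<times> C k)"
    using assms unfolding incseq_def by (blast intro: Sigma_mono)
  have UN_Times: "UNIV \<times> (\<Union>k. C k) = (\<Union>k. UNIV \<times> C k)"
    by blast
  have "lists (UNIV \<times> (\<Union>k. C k)) \<subseteq> (\<Union>k. lists (UNIV \<times> C k))"
  proof
    fix l assume "l \<in> lists (UNIV \<times> (\<Union>k. C k))"
    then have "l \<in> lists (\<Union>k. UNIV \<times> C k)"
      unfolding UN_Times .
    from lists_UN_incseq[OF \<open>incseq (\<lambda>k. UNIV \<times> C k)\<close> this]
    show "l \<in> (\<Union>k. lists (UNIV \<times> C k))"
      by blast
  qed
  then show "qspan (\<Union>k. C k) \<subseteq> (\<Union>k. qspan (C k))"
    unfolding qspan_def image_UN[symmetric] by (rule image_mono)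
  show "(\<Union>k. qspan (C k)) \<subseteq> qspan (\<Union>k. C k)"
    by (intro UN_least qspan_mono) auto
qed

lemma subspace_closure_qspan: "subspace (closure (qspan (C :: 'a::real_normed_vector set)))"
proof -
  let ?S = "qspan C"
  have "(\<lambda>p. fst p + snd p) ` (?S \<times> ?S) \<subseteq> ?S"
    by (auto intro: qspan_add)
  then have "(\<lambda>p. fst p + snd p) ` (?S \<times> ?S) \<subseteq> closure ?S"
    using closure_subset by (rule order_trans)
  then have "(\<lambda>p. fst p + snd p) ` closure (?S \<times> ?S) \<subseteq> closure ?S"
    by (intro image_closure_subset continuous_intros) auto
  then have add: "x + y \<in> closure ?S" if "x \<in> closure ?S" "y \<in> closure ?S" for x y
    using that by (force simp: closure_Times)
  have "(\<lambda>p. fst p *\<^sub>R snd p) ` (\<rat> \<times> ?S) \<subseteq> ?S"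
    by (auto elim!: Rats_cases intro: qspan_scaleR_of_rat)
  then have "(\<lambda>p. fst p *\<^sub>R snd p) ` (\<rat> \<times> ?S) \<subseteq> closure ?S"
    using closure_subset by (rule order_trans)
  then have "(\<lambda>p. fst p *\<^sub>R snd p) ` closure (\<rat> \<times> ?S) \<subseteq> closure ?S"
    by (intro image_closure_subset continuous_intros) auto
  then have scale: "c *\<^sub>R x \<in> closure ?S" if "x \<in> closure ?S" for c x
    using that by (force simp: closure_Times Rats_closure_real)
  show ?thesis
    unfolding subspace_def using add scale zero_in_qspan closure_subset by blast
qed

lemma separable_space_closure:
  assumes "countable T"
  shows "separable_space (top_of_set (closure T))"
  unfolding separable_space_def
proof (intro exI conjI)
  show "top_of_set (closure T) closure_of T = topspace (top_of_set (closure T))"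
    by (simp add: closure_of_subtopology Int_absorb1 closure_subset)
qed (use assms closure_subset in auto)

definition dense_wrt :: "('x \<Rightarrow> 'x \<Rightarrow> real) \<Rightarrow> 'x set \<Rightarrow> 'x set \<Rightarrow> bool" where
  "dense_wrt \<rho> D A \<longleftrightarrow> (\<forall>a\<in>A. \<forall>e>0. \<exists>d\<in>D. \<rho> a d < e)"

definition separable_wrt :: "('x \<Rightarrow> 'x \<Rightarrow> real) \<Rightarrow> 'x set \<Rightarrow> bool" where
  "separable_wrt \<rho> A \<longleftrightarrow> (\<exists>D. countable D \<and> D \<subseteq> A \<and> dense_wrt \<rho> D A)"

definition dense_part :: "('x \<Rightarrow> 'x \<Rightarrow> real) \<Rightarrow> 'x set \<Rightarrow> 'x set" where
  "dense_part \<rho> A = (SOME D. countable D \<and> D \<subseteq> A \<and> dense_wrt \<rho> D A)"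

lemma sup_separable_iff: "sup_separable A \<longleftrightarrow> separable_wrt supdist A"
  unfolding sup_separable_def separable_wrt_def dense_wrt_def supdist_def ..

lemma
  assumes "separable_wrt \<rho> A"
  shows countable_dense_part: "countable (dense_part \<rho> A)"
    and dense_part_subset: "dense_part \<rho> A \<subseteq> A"
    and dense_wrt_dense_part: "dense_wrt \<rho> (dense_part \<rho> A) A"
  using someI_ex[OF assms[unfolded separable_wrt_def]] unfolding dense_part_def by blast+

lemma dense_wrt_mono: "dense_wrt \<rho> D A \<Longrightarrow> D \<subseteq> D' \<Longrightarrow> dense_wrt \<rho> D' A"
  unfolding dense_wrt_def by blast

lemma separable_wrt_subset:
  assumes "separable_wrt \<rho> B" "A \<subseteq> B"
    and triangle: "\<And>x y z. x \<in> B \<Longrightarrow> y \<in> B \<Longrightarrow> z \<in> B \<Longrightarrow> \<rho> x y \<le> \<rho> x z + \<rho> y z"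
  shows "separable_wrt \<rho> A"
proof -
  obtain D where D: "countable D" "D \<subseteq> B" "dense_wrt \<rho> D B"
    using assms(1) unfolding separable_wrt_def by blast
  define I where "I = {(d, m). d \<in> D \<and> (\<exists>a\<in>A. \<rho> a d < 1 / Suc m)}"
  have "\<forall>p\<in>I. \<exists>a. a \<in> A \<and> \<rho> a (fst p) < 1 / Suc (snd p)"
    unfolding I_def by auto
  then obtain pick where pick: "\<forall>p\<in>I. pick p \<in> A \<and> \<rho> (pick p) (fst p) < 1 / Suc (snd p)"
    by (auto dest: bchoice)
  have "countable I"
    by (rule countable_subset[of _ "D \<times> UNIV"]) (use D(1) in \<open>auto simp: I_def\<close>)
  moreover have "pick ` I \<subseteq> A"
    using pick by auto
  moreover have "dense_wrt \<rho> (pick ` I) A"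
    unfolding dense_wrt_def
  proof (intro ballI allI impI)
    fix a e assume a: "a \<in> A" and "(e::real) > 0"
    then obtain m where m: "1 / Suc m < e / 2"
      by (metis half_gt_zero inverse_eq_divide of_nat_Suc reals_Archimedean)
    have "1 / Suc m > 0"
      by simp
    then obtain d where d: "d \<in> D" "\<rho> a d < 1 / Suc m"
      using D(3) a assms(2) unfolding dense_wrt_def by blast
    then have "(d, m) \<in> I"
      using a unfolding I_def by blast
    then have p: "pick (d, m) \<in> A" "\<rho> (pick (d, m)) d < 1 / Suc m"
      using pick by auto
    have "\<rho> a (pick (d, m)) \<le> \<rho> a d + \<rho> (pick (d, m)) d"
      using triangle a p(1) d(1) assms(2) D(2) by blast
    then have "\<rho> a (pick (d, m)) < e"
      using d(2) m p(2) by linarith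
    then show "\<exists>p\<in>pick ` I. \<rho> a p < e"
      using \<open>(d, m) \<in> I\<close> by blast
  qed
  ultimately show ?thesis
    unfolding separable_wrt_def by (meson countable_image)
qed

lemma separable_sphere_closure_qspan:
  fixes E :: "'a::real_normed_vector set"
  assumes "countable E"
  shows "separable_wrt dist (closure (qspan E) \<inter> sphere 0 1)"
proof (rule separable_wrt_subset)
  show "separable_wrt dist (closure (qspan E))"
    unfolding separable_wrt_def dense_wrt_def
    using assms closure_subset
    by (intro exI[of _ "qspan E"]) (auto simp: countable_qspan closure_approachable dist_commute)
qed (auto intro: dist_triangle2)

lemma norm_sgn_diff_le:
  fixes y z :: "'a::real_normed_vector"
  assumes "norm y = 1"
  shows "norm (sgn z - y) \<le> 2 * norm (z - y)"
proof -
  have "norm (sgn z - z) \<le> \<bar>1 - norm z\<bar>"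
  proof (cases "z = 0")
    case False
    then have "sgn z - z = (1 / norm z - 1) *\<^sub>R z"
      by (simp add: sgn_div_norm algebra_simps divide_inverse)
    then show ?thesis
      using False by (simp add: abs_mult[symmetric] field_simps)
  qed simp
  also have "\<dots> \<le> norm (z - y)"
    using norm_triangle_ineq3[of z y] assms by (simp add: abs_minus_commute)
  finally show ?thesis
    using norm_triangle_ineq[of "sgn z - z" "z - y"] by simp
qed

lemma sphere_closure_qspan_UN_approx:
  fixes E :: "nat \<Rightarrow> 'a::real_normed_vector set"
  assumes "incseq E" and y: "y \<in> closure (qspan (\<Union>k. E k)) \<inter> sphere 0 1" and "e > 0"
  shows "\<exists>k w. w \<in> closure (qspan (E k)) \<inter> sphere 0 1 \<and> dist y w < e"
proof -
  have "y \<in> closure (\<Union>k. qspan (E k))"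
    using y by (simp add: qspan_UN_incseq[OF \<open>incseq E\<close>])
  moreover have "min (e / 2) 1 > 0"
    using \<open>e > 0\<close> by simp
  ultimately obtain z where "z \<in> (\<Union>k. qspan (E k))" "dist z y < min (e / 2) 1"
    using closure_approachable by blast
  then obtain k where z: "z \<in> qspan (E k)" "dist z y < min (e / 2) 1"
    by blast
  have "norm y = 1"
    using y by simp
  then have "z \<noteq> 0"
    using z(2) by auto
  have "sgn z \<in> closure (qspan (E k))"
    using z(1) closure_subset subspace_closure_qspan
    unfolding sgn_div_norm by (blast intro: subspace_scale)
  moreover have "norm (sgn z) = 1"
    using \<open>z \<noteq> 0\<close> by (simp add: norm_sgn)
  moreover have "dist y (sgn z) < e"
    using norm_sgn_diff_le[OF \<open>norm y = 1\<close>, of z] z(2)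
    by (simp add: dist_norm norm_minus_commute)
  ultimately show ?thesis
    by auto
qed

section \<open>Coordinate spans in c0-sums\<close>

lemma c0sum_finite_support_approx:
  assumes f: "f \<in> c0sum (\<lambda>n. closure (C n))" and "e > 0"
  obtains K g where "\<And>n. n < K \<Longrightarrow> g n \<in> C n" "\<And>n. K \<le> n \<Longrightarrow> g n = 0" "supdist f g < e"
proof -
  have "(\<lambda>n. norm (f n)) \<longlonglongrightarrow> 0"
    using f by (simp add: c0sum_def)
  then obtain K where K: "\<And>n. K \<le> n \<Longrightarrow> norm (f n) < e / 2"
    using order_tendstoD(2)[of _ 0 sequentially "e / 2"] \<open>e > 0\<close>
    by (auto simp: eventually_sequentially)
  have "f n \<in> closure (C n)" for n
    using f by (simp add: c0sum_def)
  then have "\<forall>n. \<exists>c\<in>C n. dist c (f n) < e / 2"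
    using closure_approachable half_gt_zero \<open>e > 0\<close> by blast
  then obtain c where c: "\<And>n. c n \<in> C n" "\<And>n. dist (c n) (f n) < e / 2"
    by metis
  define g where "g n = (if n < K then c n else 0)" for n
  have "supdist f g \<le> e / 2"
    unfolding supdist_def
    by (rule supnorm_le) (use K c(2) in \<open>auto simp: g_def dist_norm norm_minus_commute less_imp_le\<close>)
  with \<open>e > 0\<close> show ?thesis
    by (intro that[of K g]) (auto simp: g_def c(1))
qed

lemma eventually_zero_in_c0sum:
  "(\<And>n. g n \<in> M n) \<Longrightarrow> (\<And>n. K \<le> n \<Longrightarrow> g n = 0) \<Longrightarrow> g \<in> c0sum M"
  unfolding c0sum_def by (auto intro!: tendsto_eventually eventually_sequentiallyI)

lemma separable_c0sum_closure:
  assumes "\<And>n. countable (C n)" "\<And>n. 0 \<in> C n"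
  shows "separable_wrt supdist (c0sum (\<lambda>n. closure (C n)))"
proof -
  define trunc :: "nat \<Rightarrow> (nat \<Rightarrow> 'a) \<Rightarrow> nat \<Rightarrow> 'a" where
    "trunc K h n = (if n < K then h n else 0)" for K h n
  define D where "D = (\<Union>K. trunc K ` Pi\<^sub>E {..<K} C)"
  have "countable D"
    unfolding D_def using assms(1) by (intro countable_UN countable_image countable_PiE) auto
  moreover have "trunc K h \<in> c0sum (\<lambda>n. closure (C n))" if "h \<in> Pi\<^sub>E {..<K} C" for K h
    using that assms(2)
    by (intro eventually_zero_in_c0sum[of _ _ K]) (auto simp: trunc_def intro: closure_subset[THEN subsetD])
  then have "D \<subseteq> c0sum (\<lambda>n. closure (C n))"
    unfolding D_def by blast
  moreover have "dense_wrt supdist D (c0sum (\<lambda>n. closure (C n)))"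
    unfolding dense_wrt_def
  proof (intro ballI allI impI)
    fix f e assume "f \<in> c0sum (\<lambda>n. closure (C n))" "(e::real) > 0"
    then obtain K g where g: "\<And>n. n < K \<Longrightarrow> g n \<in> C n" "\<And>n. K \<le> n \<Longrightarrow> g n = 0" "supdist f g < e"
      using c0sum_finite_support_approx by blast
    have "restrict g {..<K} \<in> Pi\<^sub>E {..<K} C"
      using g(1) by simp
    then have "trunc K (restrict g {..<K}) \<in> D"
      unfolding D_def by blast
    moreover have "trunc K (restrict g {..<K}) = g"
      using g(2) by (auto simp: trunc_def)
    ultimately have "g \<in> D"
      by simp
    with g(3) show "\<exists>d\<in>D. supdist f d < e"
      by blast
  qed
  ultimately show ?thesis
    unfolding separable_wrt_def by blast
qed

lemma c0sum_closure_UN_incseq_approx: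
  assumes mono: "\<And>n. incseq (\<lambda>k. C k n)" and zero: "\<And>k n. 0 \<in> C k n"
    and f: "f \<in> c0sum (\<lambda>n. closure (\<Union>k. C k n))" and "e > 0"
  shows "\<exists>k g. g \<in> c0sum (C k) \<and> supdist f g < e"
proof -
  obtain K g where g: "\<And>n. n < K \<Longrightarrow> g n \<in> (\<Union>k. C k n)" "\<And>n. K \<le> n \<Longrightarrow> g n = 0" "supdist f g < e"
    using c0sum_finite_support_approx[OF f \<open>e > 0\<close>] by blast
  have "\<forall>n. \<exists>k. n < K \<longrightarrow> g n \<in> C k n"
    using g(1) by blast
  from choice[OF this] obtain kk where kk: "\<forall>n. n < K \<longrightarrow> g n \<in> C (kk n) n"
    by blast
  define k where "k = Max (kk ` {..<K})"
  have "g n \<in> C k n" for n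
  proof (cases "n < K")
    case True
    then have "kk n \<le> k"
      unfolding k_def by (intro Max_ge) auto
    then show ?thesis
      using kk True mono[of n] by (auto dest: monoD)
  qed (use g(2) zero in auto)
  then have "g \<in> c0sum (C k)"
    using g(2) by (rule eventually_zero_in_c0sum)
  with g(3) show ?thesis
    by blast
qed

lemma normalize_in_c0sphere:
  assumes g: "g \<in> c0sum M" and M: "\<And>n. subspace (M n)" and "supnorm g \<noteq> 0"
  shows "(\<lambda>n. (1 / supnorm g) *\<^sub>R g n) \<in> c0sphere M"
proof -
  have "supnorm g > 0"
    using supnorm_nonneg[OF c0sum_bounded[OF g]] \<open>supnorm g \<noteq> 0\<close> by linarith
  have "(\<lambda>n. (1 / supnorm g) * norm (g n)) \<longlonglongrightarrow> 0"
    using g by (intro tendsto_mult_right_zero) (simp add: c0sum_def)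
  then show ?thesis
    using g M \<open>supnorm g > 0\<close> supnorm_scaleR[OF c0sum_bounded[OF g], of "1 / supnorm g"]
    by (simp add: c0sphere_def c0sum_def subspace_scale)
qed

definition coord_span :: "(nat \<Rightarrow> 'a::real_normed_vector) set \<Rightarrow> nat \<Rightarrow> 'a set" where
  "coord_span D n = closure (qspan ((\<lambda>d. d n) ` D))"

lemma subspace_coord_span: "subspace (coord_span D n)"
  unfolding coord_span_def by (rule subspace_closure_qspan)

lemma closed_coord_span: "closed (coord_span D n)"
  unfolding coord_span_def by simp

lemma separable_space_coord_span:
  "countable D \<Longrightarrow> separable_space (top_of_set (coord_span D n))"
  unfolding coord_span_def by (intro separable_space_closure countable_qspan countable_image)

lemma coord_span_subset:
  assumes "D \<subseteq> c0sum X" "subspace (X n)" "closed (X n)"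
  shows "coord_span D n \<subseteq> X n"
  unfolding coord_span_def
  using assms by (intro closure_minimal qspan_subset_subspace) (auto simp: c0sum_def)

lemma subset_c0sum_coord_span:
  assumes A: "A \<subseteq> c0sum X" and D: "D \<subseteq> c0sum X" and dense: "dense_wrt supdist D A"
  shows "A \<subseteq> c0sum (coord_span D)"
proof
  fix f assume "f \<in> A"
  have "f n \<in> coord_span D n" for n
  proof -
    have "\<exists>x\<in>(\<lambda>d. d n) ` D. dist x (f n) < e" if "e > 0" for e
    proof -
      obtain d where "d \<in> D" "supdist f d < e"
        using dense \<open>f \<in> A\<close> \<open>e > 0\<close> unfolding dense_wrt_def by blast
      moreover have "norm (f n - d n) \<le> supdist f d"
        using \<open>d \<in> D\<close> \<open>f \<in> A\<close> A D by (intro norm_diff_le_supdist c0sum_bounded) auto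
      ultimately show ?thesis
        by (force simp: dist_norm norm_minus_commute)
    qed
    then have "f n \<in> closure ((\<lambda>d. d n) ` D)"
      by (simp add: closure_approachable)
    then show ?thesis
      unfolding coord_span_def using closure_mono[OF qspan_superset] by blast
  qed
  with \<open>f \<in> A\<close> A show "f \<in> c0sum (coord_span D)"
    by (auto simp: c0sum_def)
qed

lemma separable_c0sphere_coord_span:
  assumes "countable D"
  shows "separable_wrt supdist (c0sphere (coord_span D))"
proof (rule separable_wrt_subset)
  show "separable_wrt supdist (c0sum (coord_span D))"
    unfolding coord_span_def
    using assms by (intro separable_c0sum_closure countable_qspan countable_image zero_in_qspan)
  show "supdist x y \<le> supdist x z + supdist y z" if "x \<in> c0sum (coord_span D)"
    "y \<in> c0sum (coord_span D)" "z \<in> c0sum (coord_span D)" for x y z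
    using supdist_triangle[of x z y] that by (simp add: c0sum_bounded supdist_commute)
qed (simp add: c0sphere_def)

lemma c0sphere_coord_span_UN_approx:
  assumes "incseq D" and f: "f \<in> c0sphere (coord_span (\<Union>k. D k))" and "e > 0"
  shows "\<exists>k h. h \<in> c0sphere (coord_span (D k)) \<and> supdist f h < e"
proof -
  define C where "C k n = qspan ((\<lambda>d. d n) ` D k)" for k n
  have coords_mono: "incseq (\<lambda>k. (\<lambda>d. d n) ` D k)" for n
    by (rule monoI, rule image_mono, erule monoD[OF \<open>incseq D\<close>])
  have mono: "incseq (\<lambda>k. C k n)" for n
    unfolding C_def by (rule monoI, rule qspan_mono, erule monoD[OF coords_mono])
  have "coord_span (\<Union>k. D k) = (\<lambda>n. closure (\<Union>k. C k n))"
    unfolding coord_span_def C_def image_UN qspan_UN_incseq[OF coords_mono] ..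
  then have "f \<in> c0sum (\<lambda>n. closure (\<Union>k. C k n))"
    using f by (simp add: c0sphere_def)
  moreover have "min (e / 2) 1 > 0"
    using \<open>e > 0\<close> by simp
  moreover have zero: "0 \<in> C k n" for k n
    unfolding C_def by (rule zero_in_qspan)
  ultimately obtain k g where g: "g \<in> c0sum (C k)" "supdist f g < min (e / 2) 1"
    using c0sum_closure_UN_incseq_approx[of C, OF mono zero] by blast
  have "C k n \<subseteq> coord_span (D k) n" for n
    unfolding C_def coord_span_def by (rule closure_subset)
  then have g': "g \<in> c0sum (coord_span (D k))"
    using c0sum_mono g(1) by blast
  have f': "f \<in> c0sum (coord_span (\<Union>k. D k))" "supnorm f = 1"
    using f by (auto simp: c0sphere_def)
  have "\<bar>supnorm f - supnorm g\<bar> < 1"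
    using abs_supnorm_diff_le_supdist[OF c0sum_bounded[OF f'(1)] c0sum_bounded[OF g']] g(2) by linarith
  then have "supnorm g \<noteq> 0"
    using f'(2) by auto
  with g' have "(\<lambda>n. (1 / supnorm g) *\<^sub>R g n) \<in> c0sphere (coord_span (D k))"
    by (intro normalize_in_c0sphere subspace_coord_span)
  moreover have "supdist f (\<lambda>n. (1 / supnorm g) *\<^sub>R g n) < e"
    using supdist_normalize_le[OF c0sum_bounded[OF f'(1)] f'(2) c0sum_bounded[OF g']] g(2) by linarith
  ultimately show ?thesis
    by blast
qed

section \<open>The back-and-forth construction\<close>

locale c0_sphere_isometry =
  fixes X :: "nat \<Rightarrow> 'a::real_normed_vector set" and \<Delta> :: "(nat \<Rightarrow> 'a) \<Rightarrow> 'b::real_normed_vector"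
  assumes subspace_X: "\<And>n. subspace (X n)" and closed_X: "\<And>n. closed (X n)"
    and isometry: "\<And>f g. f \<in> c0sphere X \<Longrightarrow> g \<in> c0sphere X \<Longrightarrow> dist (\<Delta> f) (\<Delta> g) = supdist f g"
    and onto: "\<Delta> ` c0sphere X = sphere 0 1"
begin

definition \<Gamma> :: "'b \<Rightarrow> nat \<Rightarrow> 'a" where
  "\<Gamma> = inv_into (c0sphere X) \<Delta>"

lemma \<Gamma>_in_c0sphere: "y \<in> sphere 0 1 \<Longrightarrow> \<Gamma> y \<in> c0sphere X"
  unfolding \<Gamma>_def using onto by (metis inv_into_into)

lemma \<Delta>_\<Gamma>: "y \<in> sphere 0 1 \<Longrightarrow> \<Delta> (\<Gamma> y) = y"
  unfolding \<Gamma>_def using onto by (metis f_inv_into_f)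

definition forward_dense :: "(nat \<Rightarrow> 'a) set \<Rightarrow> 'b set" where
  "forward_dense D = \<Delta> ` dense_part supdist (c0sphere (coord_span D))"

definition backward_dense :: "'b set \<Rightarrow> (nat \<Rightarrow> 'a) set" where
  "backward_dense E = \<Gamma> ` dense_part dist (closure (qspan E) \<inter> sphere 0 1)"

fun Dstage :: "(nat \<Rightarrow> 'a) set \<Rightarrow> nat \<Rightarrow> (nat \<Rightarrow> 'a) set"
  and Estage :: "(nat \<Rightarrow> 'a) set \<Rightarrow> nat \<Rightarrow> 'b set" where
  "Dstage D0 0 = D0"
| "Dstage D0 (Suc k) = Dstage D0 k \<union> backward_dense (Estage D0 k)"
| "Estage D0 0 = {}"
| "Estage D0 (Suc k) = Estage D0 k \<union> forward_dense (Dstage D0 k)"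

lemma incseq_Dstage: "incseq (Dstage D0)"
  by (rule incseq_SucI) simp

lemma incseq_Estage: "incseq (Estage D0)"
  by (rule incseq_SucI) simp

lemma coord_span_subset_X: "D \<subseteq> c0sum X \<Longrightarrow> coord_span D n \<subseteq> X n"
  by (intro coord_span_subset subspace_X closed_X)

lemma c0sphere_coord_span_subset: "D \<subseteq> c0sum X \<Longrightarrow> c0sphere (coord_span D) \<subseteq> c0sphere X"
  by (intro c0sphere_mono coord_span_subset_X)

context
  fixes D0 assumes D0: "countable D0" "D0 \<subseteq> c0sum X"
begin

lemma stages_countable:
  "countable (Dstage D0 k) \<and> Dstage D0 k \<subseteq> c0sum X \<and> countable (Estage D0 k)"
proof (induction k)
  case (Suc k)
  have sep: "separable_wrt dist (closure (qspan (Estage D0 k)) \<inter> sphere 0 1)"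
    using Suc by (intro separable_sphere_closure_qspan) simp
  have "backward_dense (Estage D0 k) \<subseteq> \<Gamma> ` sphere 0 1"
    unfolding backward_dense_def using dense_part_subset[OF sep] by blast
  also have "\<dots> \<subseteq> c0sum X"
    using \<Gamma>_in_c0sphere by (auto simp: c0sphere_def)
  finally have "backward_dense (Estage D0 k) \<subseteq> c0sum X" .
  moreover have "countable (backward_dense (Estage D0 k))"
    unfolding backward_dense_def using countable_dense_part[OF sep] by (rule countable_image)
  moreover have "countable (forward_dense (Dstage D0 k))"
    unfolding forward_dense_def using Suc
    by (intro countable_image countable_dense_part separable_c0sphere_coord_span) simp
  ultimately show ?case
    using Suc by simp
qed (use D0 in simp)

lemma stages_UN_countable:
  "countable (\<Union>k. Dstage D0 k)" "(\<Union>k. Dstage D0 k) \<subseteq> c0sum X" "countable (\<Union>k. Estage D0 k)"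
  using stages_countable by auto

lemma image_c0sphere_stages_subset:
  "\<Delta> ` c0sphere (coord_span (\<Union>k. Dstage D0 k)) \<subseteq> closure (qspan (\<Union>k. Estage D0 k)) \<inter> sphere 0 1"
proof
  fix y assume "y \<in> \<Delta> ` c0sphere (coord_span (\<Union>k. Dstage D0 k))"
  then obtain f where f: "f \<in> c0sphere (coord_span (\<Union>k. Dstage D0 k))" and y: "y = \<Delta> f"
    by blast
  then have fX: "f \<in> c0sphere X"
    using c0sphere_coord_span_subset[OF stages_UN_countable(2)] by blast
  have "\<exists>y\<in>qspan (\<Union>k. Estage D0 k). dist y (\<Delta> f) < e" if "e > 0" for e
  proof -
    obtain k h where h: "h \<in> c0sphere (coord_span (Dstage D0 k))" "supdist f h < e / 2"
      using c0sphere_coord_span_UN_approx[OF incseq_Dstage f half_gt_zero[OF \<open>e > 0\<close>]] by blast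
    have sep: "separable_wrt supdist (c0sphere (coord_span (Dstage D0 k)))"
      using stages_countable by (intro separable_c0sphere_coord_span) auto
    then obtain p where p: "p \<in> dense_part supdist (c0sphere (coord_span (Dstage D0 k)))" "supdist h p < e / 2"
      using dense_wrt_dense_part[OF sep] h(1) \<open>e > 0\<close> unfolding dense_wrt_def by (meson half_gt_zero)
    have pX: "p \<in> c0sphere X"
      using dense_part_subset[OF sep] p(1) c0sphere_coord_span_subset stages_countable by blast
    have "dist (\<Delta> p) (\<Delta> f) = supdist f p"
      using isometry[OF pX fX] by (simp add: supdist_commute)
    also have "\<dots> \<le> supdist f h + supdist h p"
      using f h(1) pX by (intro supdist_triangle c0sum_bounded) (auto simp: c0sphere_def)
    finally have "dist (\<Delta> p) (\<Delta> f) < e"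
      using h(2) p(2) by linarith
    moreover have "\<Delta> p \<in> Estage D0 (Suc k)"
      using p(1) by (simp add: forward_dense_def)
    moreover have "Estage D0 (Suc k) \<subseteq> qspan (\<Union>k. Estage D0 k)"
      by (rule order_trans[OF UN_upper qspan_superset]) simp
    ultimately show ?thesis
      by blast
  qed
  then have "\<Delta> f \<in> closure (qspan (\<Union>k. Estage D0 k))"
    by (simp add: closure_approachable)
  moreover have "\<Delta> f \<in> sphere 0 1"
    using fX onto by blast
  ultimately show "y \<in> closure (qspan (\<Union>k. Estage D0 k)) \<inter> sphere 0 1"
    using y by blast
qed

lemma sphere_stages_subset_image:
  "closure (qspan (\<Union>k. Estage D0 k)) \<inter> sphere 0 1 \<subseteq> \<Delta> ` c0sphere (coord_span (\<Union>k. Dstage D0 k))"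
proof
  fix y assume y: "y \<in> closure (qspan (\<Union>k. Estage D0 k)) \<inter> sphere 0 1"
  have fX: "\<Gamma> y \<in> c0sphere X"
    using y \<Gamma>_in_c0sphere by blast
  have "\<exists>d\<in>(\<Union>k. Dstage D0 k). supdist (\<Gamma> y) d < e" if "e > 0" for e
  proof -
    obtain k w where w: "w \<in> closure (qspan (Estage D0 k)) \<inter> sphere 0 1" "dist y w < e / 2"
      using sphere_closure_qspan_UN_approx[OF incseq_Estage y half_gt_zero[OF \<open>e > 0\<close>]] by blast
    have sep: "separable_wrt dist (closure (qspan (Estage D0 k)) \<inter> sphere 0 1)"
      using stages_countable by (intro separable_sphere_closure_qspan) auto
    then obtain q where q: "q \<in> dense_part dist (closure (qspan (Estage D0 k)) \<inter> sphere 0 1)" "dist w q < e / 2"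
      using dense_wrt_dense_part[OF sep] w(1) \<open>e > 0\<close> unfolding dense_wrt_def by (meson half_gt_zero)
    have "q \<in> sphere 0 1"
      using dense_part_subset[OF sep] q(1) by blast
    then have "supdist (\<Gamma> y) (\<Gamma> q) = dist y q"
      using isometry[OF fX \<Gamma>_in_c0sphere] y by (simp add: \<Delta>_\<Gamma>)
    also have "\<dots> < e"
      using dist_triangle[of y q w] w(2) q(2) by linarith
    finally have "supdist (\<Gamma> y) (\<Gamma> q) < e" .
    moreover have "\<Gamma> q \<in> Dstage D0 (Suc k)"
      using q(1) by (simp add: backward_dense_def)
    ultimately show ?thesis
      by blast
  qed
  then have "{\<Gamma> y} \<subseteq> c0sum (coord_span (\<Union>k. Dstage D0 k))"
    using fX stages_UN_countable(2)
    by (intro subset_c0sum_coord_span[of _ X]) (auto simp: c0sphere_def dense_wrt_def)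
  then have "\<Gamma> y \<in> c0sphere (coord_span (\<Union>k. Dstage D0 k))"
    using fX by (simp add: c0sphere_def)
  then show "y \<in> \<Delta> ` c0sphere (coord_span (\<Union>k. Dstage D0 k))"
    using y \<Delta>_\<Gamma> by (metis IntD2 image_eqI)
qed

end

end

theorem lemma3p5:
  fixes X :: "nat \<Rightarrow> 'a::banach set"
    and A :: "(nat \<Rightarrow> 'a) set"
    and \<Delta> :: "(nat \<Rightarrow> 'a) \<Rightarrow> 'b::banach"
  assumes X_sub: "\<And>n. subspace (X n) \<and> closed (X n)"
    and A_sub: "A \<subseteq> c0sum X"
    and A_sep: "sup_separable A"
    and Delta_isom: "\<forall>f\<in>c0sphere X. \<forall>g\<in>c0sphere X.
                       dist (\<Delta> f) (\<Delta> g) = supnorm (\<lambda>n. f n - g n)"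
    and Delta_onto: "\<Delta> ` c0sphere X = sphere 0 1"
  shows "\<exists>M :: nat \<Rightarrow> 'a set. \<exists>N :: 'b set.
           (\<forall>n. subspace (M n) \<and> closed (M n) \<and> M n \<subseteq> X n \<and>
                separable_space (top_of_set (M n))) \<and>
           subspace N \<and> closed N \<and> separable_space (top_of_set N) \<and>
           A \<subseteq> c0sum M \<and>
           \<Delta> ` c0sphere M = N \<inter> sphere 0 1"
proof -
  interpret c0_sphere_isometry X \<Delta>
    using X_sub Delta_isom Delta_onto by unfold_locales (auto simp: supdist_def)
  obtain D0 where D0: "countable D0" "D0 \<subseteq> A" "dense_wrt supdist D0 A"
    using A_sep unfolding sup_separable_iff separable_wrt_def by blast
  then have D0X: "D0 \<subseteq> c0sum X"
    using A_sub by blast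
  let ?D = "\<Union>k. Dstage D0 k" and ?E = "\<Union>k. Estage D0 k"
  note stages = stages_UN_countable[OF D0(1) D0X]
  have "D0 \<subseteq> ?D"
    using UN_upper[of 0 UNIV "Dstage D0"] by simp
  with D0(3) have "dense_wrt supdist ?D A"
    by (rule dense_wrt_mono)
  then have "A \<subseteq> c0sum (coord_span ?D)"
    using A_sub stages(2) by (intro subset_c0sum_coord_span)
  moreover have "\<Delta> ` c0sphere (coord_span ?D) = closure (qspan ?E) \<inter> sphere 0 1"
    using image_c0sphere_stages_subset[OF D0(1) D0X] sphere_stages_subset_image[OF D0(1) D0X]
    by (rule equalityI)
  ultimately show ?thesis
    using stages coord_span_subset_X[OF stages(2)]
    by (intro exI[of _ "coord_span ?D"] exI[of _ "closure (qspan ?E)"])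
      (auto simp: subspace_coord_span closed_coord_span separable_space_coord_span
        subspace_closure_qspan countable_qspan separable_space_closure)
qed

end
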